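(* Let $\mathcal X$ be a Polish space with Borel probability measure $\rho$, $a<b$ reals, $T\ge1$, and $\mathcal C\subseteq[a,b]^T$ nonempty compact. Let $\ell:[a,b]\times[a,b]\to\mathbb R$ be SELF with $\ell(y,y')=\langle\psi(y),V\psi(y')\rangle_{\mathcal H}$ and continuous. Let $g_1,\dots,g_T:\mathcal X\to\mathcal H$ be measurable with $\|g_t(x)\|_{\mathcal H}$ bounded almost everywhere, and set $$r(x,c)=\frac1T\sum_{t=1}^T\langle\psi(c_t),Vg_t(x)\rangle_{\mathcal H},\qquad\bar{\mathcal E}(f)=\int_{\mathcal X}r(x,f(x))\,d\rho(x).$$ Then there exist a measurable $f^\circ:\mathcal X\to\mathcal C$ with $f^\circ(x)\in\operatorname*{argmin}_{c\in\mathcal C}r(x,c)$ and a measurable function $m$ with $m(x)=\min_{c\in\mathcal C}r(x,c)$ almost everywhere, such that $$\bar{\mathcal E}(f^\circ)=\int_{\mathcal X}m(x)\,d\rho(x)=\inf_{f:\mathcal X\to\mathcal C}\bar{\mathcal E}(f),$$ the infimum being over measurable $f$.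
   Context: Definition (SELF): Let $\mathcal{Y}$ be a compact set. A function $\ell:\mathcal{Y}\times\mathcal{Y}\to\mathbb{R}$ is a Structure Encoding Loss Function (SELF) if there exist a continuous feature map $\psi:\mathcal{Y}\to\mathcal{H}$, with $\mathcal{H}$ a reproducing kernel Hilbert space on $\mathcal{Y}$, and a continuous linear operator $V:\mathcal{H}\to\mathcal{H}$ such that $\ell(y,y')=\langle\psi(y),V\psi(y')\rangle_{\mathcal H}$ for all $y,y'\in\mathcal{Y}$. For $c\in\mathbb R^T$, $c_t$ is its $t$-th coordinate. *)

theory Defs
  imports "HOL-Analysis.Analysis" "HOL-Probability.Probability"
begin

definition rfun :: "(real \<Rightarrow> 'h::real_inner) \<Rightarrow> ('h \<Rightarrow> 'h) \<Rightarrow> ('t::finite \<Rightarrow> 'a \<Rightarrow> 'h)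
    \<Rightarrow> 'a \<Rightarrow> real^'t \<Rightarrow> real" where
  "rfun \<psi> V g x c = (1 / real CARD('t)) * (\<Sum>t\<in>UNIV. inner (\<psi> (c $ t)) (V (g t x)))"

definition Ebar :: "'a measure \<Rightarrow> (real \<Rightarrow> 'h::real_inner) \<Rightarrow> ('h \<Rightarrow> 'h) \<Rightarrow> ('t::finite \<Rightarrow> 'a \<Rightarrow> 'h)
    \<Rightarrow> ('a \<Rightarrow> real^'t) \<Rightarrow> real" where
  "Ebar \<rho> \<psi> V g f = (\<integral>x. rfun \<psi> V g x (f x) \<partial>\<rho>)"

end

theory Submission
  imports Defs
begin

text \<open>For each \<open>x\<close>, \<open>r(x, \<cdot>)\<close> is continuous on the compact set \<open>C\<close> and each \<open>r(\<cdot>, c)\<close> is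
  measurable. Hence \<open>min\<^sub>c r(x, c)\<close> is measurable (it is an infimum over a countable dense subset
  of \<open>C\<close>) and attained. A measurable minimiser is the limit of centres taken from a dense sequence:
  at stage \<open>k\<close> pick the least index whose point lies within \<open>2\<^sup>-\<^sup>k\<close> of some minimiser and
  close to the previous centre; least-index choices are measurable, and the centres form a Cauchy
  sequence converging to a minimiser. As \<open>r\<close> is bounded almost everywhere, every risk is
  integrable, and integrating \<open>r(x, f x) \<ge> min\<^sub>c r(x, c) = r(x, f\<degree> x)\<close> shows that \<open>f\<degree>\<close> attains the
  infimum of the expected risk.\<close>

lemma INF_closure_eq:
  fixes h :: "'b::metric_space \<Rightarrow> real"
  assumes "compact S" "D \<subseteq> S" "S \<subseteq> closure D" "D \<noteq> {}" "continuous_on S h"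
  shows "(INF c\<in>S. h c) = (INF c\<in>D. h c)"
proof (rule antisym)
  have bdd: "bdd_below (h ` S)"
    by (intro bounded_imp_bdd_below compact_imp_bounded compact_continuous_image assms)
  show "(INF c\<in>S. h c) \<le> (INF c\<in>D. h c)"
    by (rule cINF_superset_mono[OF \<open>D \<noteq> {}\<close> bdd \<open>D \<subseteq> S\<close>]) simp
  have "S \<noteq> {}" using assms(2,4) by blast
  moreover have "(INF c\<in>D. h c) \<le> h c" if "c \<in> S" for c
  proof -
    from that assms(3) obtain s where s: "\<And>n. s n \<in> D" "s \<longlonglongrightarrow> c"
      by (meson closure_sequential subsetD)
    have "(\<lambda>n. h (s n)) \<longlonglongrightarrow> h c"
      using s(1) assms(2)
      by (intro continuous_on_tendsto_compose[OF assms(5) s(2) that] always_eventually) blast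
    moreover have "(INF c\<in>D. h c) \<le> h (s n)" for n
      by (rule cINF_lower[OF bdd_below_mono[OF bdd image_mono[OF assms(2)]] s(1)])
    ultimately show ?thesis by (meson LIMSEQ_le_const)
  qed
  ultimately show "(INF c\<in>D. h c) \<le> (INF c\<in>S. h c)"
    by (rule cINF_greatest)
qed

lemma borel_measurable_INF_compact:
  fixes h :: "'a \<Rightarrow> 'b::{metric_space, second_countable_topology} \<Rightarrow> real"
  assumes "compact S" "S \<noteq> {}" "\<And>x. continuous_on S (h x)"
    and "\<And>c. c \<in> S \<Longrightarrow> (\<lambda>x. h x c) \<in> borel_measurable M"
  shows "(\<lambda>x. INF c\<in>S. h x c) \<in> borel_measurable M"
proof -
  obtain D where D: "countable D" "D \<subseteq> S" "S \<subseteq> closure D" using separable by blast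
  with assms(2) have "D \<noteq> {}" by auto
  with D assms(1,3) have "(\<lambda>x. INF c\<in>S. h x c) = (\<lambda>x. INF c\<in>D. h x c)"
    by (intro ext INF_closure_eq)
  also have "\<dots> \<in> borel_measurable M"
    using D assms(4) by (intro borel_measurable_cINF_real) auto
  finally show ?thesis .
qed

lemma convergent_if_summable_dist_Suc:
  fixes X :: "nat \<Rightarrow> 'b::banach"
  assumes "summable (\<lambda>k. dist (X (Suc k)) (X k))"
  shows "convergent X"
proof -
  have "summable (\<lambda>k. X (Suc k) - X k)"
    using assms by (intro summable_norm_cancel[of "\<lambda>k. X (Suc k) - X k"]) (simp add: dist_norm)
  then have "(\<lambda>k. X 0 + (\<Sum>j<k. X (Suc j) - X j)) \<longlonglongrightarrow> X 0 + (\<Sum>j. X (Suc j) - X j)"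
    by (intro tendsto_add tendsto_const summable_LIMSEQ)
  then show ?thesis
    unfolding sum_lessThan_telescope by (auto simp: convergent_def)
qed

locale compact_caratheodory =
  fixes M :: "'a measure" and C :: "'b::{banach, second_countable_topology} set"
    and h :: "'a \<Rightarrow> 'b \<Rightarrow> real"
  assumes compact: "compact C" and nonempty: "C \<noteq> {}"
    and continuous: "\<And>x. continuous_on C (h x)"
    and measurable: "\<And>c. c \<in> C \<Longrightarrow> (\<lambda>x. h x c) \<in> borel_measurable M"
begin

definition min_val :: "'a \<Rightarrow> real" where
  "min_val x = (INF c\<in>C. h x c)"

lemma borel_measurable_min_val [measurable]: "min_val \<in> borel_measurable M"
  unfolding min_val_def[abs_def]
  by (rule borel_measurable_INF_compact[OF compact nonempty continuous measurable])

lemma bdd_below_image: "bdd_below (h x ` C)"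
  by (intro bounded_imp_bdd_below compact_imp_bounded compact_continuous_image continuous compact)

lemma min_val_le: "c \<in> C \<Longrightarrow> min_val x \<le> h x c"
  unfolding min_val_def by (rule cINF_lower[OF bdd_below_image])

lemma min_val_attained: "\<exists>c\<in>C. h x c = min_val x"
proof -
  obtain c where c: "c \<in> C" "\<And>c'. c' \<in> C \<Longrightarrow> h x c \<le> h x c'"
    using continuous_attains_inf[OF compact nonempty continuous] by blast
  then have "h x c \<le> min_val x"
    unfolding min_val_def using nonempty by (intro cINF_greatest) auto
  with c(1) min_val_le[OF c(1), of x] show ?thesis by force
qed

lemma pred_attains_min_val_in:
  assumes "compact S" "S \<noteq> {}" "S \<subseteq> C"
  shows "Measurable.pred M (\<lambda>x. \<exists>c\<in>S. h x c = min_val x)"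
proof -
  have cont_S: "continuous_on S (h x)" for x
    using continuous assms(3) by (rule continuous_on_subset)
  have bdd_S: "bdd_below (h x ` S)" for x
    using bdd_below_image assms(3) by (rule bdd_below_mono[OF _ image_mono])
  have "(\<exists>c\<in>S. h x c = min_val x) \<longleftrightarrow> (INF c\<in>S. h x c) \<le> min_val x" for x
  proof
    assume "\<exists>c\<in>S. h x c = min_val x"
    then show "(INF c\<in>S. h x c) \<le> min_val x"
      using cINF_lower[OF bdd_S] by metis
  next
    assume le: "(INF c\<in>S. h x c) \<le> min_val x"
    obtain c where c: "c \<in> S" "\<And>c'. c' \<in> S \<Longrightarrow> h x c \<le> h x c'"
      using continuous_attains_inf[OF assms(1,2) cont_S] by blast
    then have "h x c \<le> (INF c\<in>S. h x c)"
      using assms(2) by (intro cINF_greatest) auto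
    with le min_val_le[of c x] c(1) assms(3) show "\<exists>c\<in>S. h x c = min_val x" by force
  qed
  moreover have "(\<lambda>x. INF c\<in>S. h x c) \<in> borel_measurable M"
    using assms(3) by (intro borel_measurable_INF_compact assms(1,2) cont_S measurable) auto
  ultimately show ?thesis by simp
qed

end

locale argmin_approximation = compact_caratheodory +
  fixes d :: "nat \<Rightarrow> 'b"
  assumes range_dense: "range d \<subseteq> C" "C \<subseteq> closure (range d)"
begin

definition near_argmin :: "nat \<Rightarrow> nat \<Rightarrow> 'a \<Rightarrow> bool" where
  "near_argmin k n x \<longleftrightarrow> (\<exists>c\<in>C. dist (d n) c \<le> (1/2)^k \<and> h x c = min_val x)"

lemma pred_near_argmin [measurable]: "Measurable.pred M (near_argmin k n)"
proof -
  have "compact (C \<inter> cball (d n) ((1/2)^k))" "d n \<in> C \<inter> cball (d n) ((1/2)^k)"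
    using compact range_dense(1) by (auto intro: compact_Int_closed)
  then have "Measurable.pred M (\<lambda>x. \<exists>c\<in>C \<inter> cball (d n) ((1/2)^k). h x c = min_val x)"
    by (intro pred_attains_min_val_in) auto
  then show ?thesis
    unfolding near_argmin_def[abs_def] by (simp add: Bex_def conj_commute conj_left_commute)
qed

lemma dense_index:
  assumes "c \<in> C" "e > 0"
  shows "\<exists>n. dist (d n) c < e"
proof -
  have "c \<in> closure (range d)" using assms(1) range_dense(2) by blast
  with assms(2) obtain y where "y \<in> range d" "dist y c < e"
    unfolding closure_approachable by blast
  then show ?thesis by blast
qed

lemma near_argmin_exists:
  assumes "c \<in> C" "h x c = min_val x" "dist q c \<le> (1/2)^k"
  shows "\<exists>n. dist (d n) q \<le> 2 * (1/2)^k \<and> near_argmin (Suc k) n x"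
proof -
  obtain n where n: "dist (d n) c < (1/2)^Suc k"
    using dense_index[OF assms(1), of "(1/2)^Suc k"] by auto
  moreover have "(1/2::real)^Suc k \<le> (1/2)^k" by simp
  ultimately have "dist (d n) q \<le> 2 * (1/2)^k"
    using assms(3) dist_triangle2[of "d n" q c] by linarith
  moreover have "near_argmin (Suc k) n x"
    unfolding near_argmin_def using assms(1,2) n by (intro bexI[of _ c]) auto
  ultimately show ?thesis by blast
qed

text \<open>Choosing the least admissible index keeps \<open>approx k\<close> measurable in \<open>x\<close>.\<close>

primrec approx :: "nat \<Rightarrow> 'a \<Rightarrow> 'b" where
  "approx 0 x = d (LEAST n. near_argmin 0 n x)"
| "approx (Suc k) x =
     d (LEAST n. dist (d n) (approx k x) \<le> 2 * (1/2)^k \<and> near_argmin (Suc k) n x)"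

lemma borel_measurable_approx [measurable]: "approx k \<in> borel_measurable M"
proof (induction k)
  case 0
  have "(\<lambda>x. LEAST n. near_argmin 0 n x) \<in> measurable M (count_space UNIV)" by measurable
  then show ?case by (simp add: measurable_compose[of _ _ "count_space UNIV"])
next
  case (Suc k)
  note Suc [measurable]
  have "(\<lambda>x. LEAST n. dist (d n) (approx k x) \<le> 2 * (1/2)^k \<and> near_argmin (Suc k) n x)
      \<in> measurable M (count_space UNIV)" by measurable
  then show ?case by (simp add: measurable_compose[of _ _ "count_space UNIV"])
qed

lemma approx_near_argmin: "\<exists>c\<in>C. dist (approx k x) c \<le> (1/2)^k \<and> h x c = min_val x"
proof (induction k)
  case 0
  obtain c where c: "c \<in> C" "h x c = min_val x" using min_val_attained by blast
  moreover obtain n where "dist (d n) c < 1" using dense_index[OF c(1), of 1] by auto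
  ultimately have "near_argmin 0 n x"
    unfolding near_argmin_def by (intro bexI[of _ c]) auto
  from LeastI[of "\<lambda>n. near_argmin 0 n x", OF this]
  show ?case unfolding approx.simps near_argmin_def by simp
next
  case (Suc k)
  then obtain c where "c \<in> C" "dist (approx k x) c \<le> (1/2)^k" "h x c = min_val x" by blast
  from LeastI_ex[OF near_argmin_exists[OF this(1,3,2)]]
  show ?case unfolding approx.simps near_argmin_def by simp
qed

lemma dist_approx_Suc: "dist (approx (Suc k) x) (approx k x) \<le> 2 * (1/2)^k"
proof -
  obtain c where "c \<in> C" "dist (approx k x) c \<le> (1/2)^k" "h x c = min_val x"
    using approx_near_argmin by blast
  from LeastI_ex[OF near_argmin_exists[OF this(1,3,2)]] show ?thesis by simp
qed

lemma convergent_approx: "convergent (\<lambda>k. approx k x)"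
proof (rule convergent_if_summable_dist_Suc)
  show "summable (\<lambda>k. dist (approx (Suc k) x) (approx k x))"
    by (rule summable_comparison_test[OF _ summable_mult[OF summable_geometric]])
       (use dist_approx_Suc in auto)
qed

lemma lim_approx_argmin: "lim (\<lambda>k. approx k x) \<in> C \<and> h x (lim (\<lambda>k. approx k x)) = min_val x"
proof -
  let ?l = "lim (\<lambda>k. approx k x)"
  obtain cs where cs: "\<And>k. cs k \<in> C" "\<And>k. dist (approx k x) (cs k) \<le> (1/2)^k"
      "\<And>k. h x (cs k) = min_val x"
    using approx_near_argmin[of _ x] by metis
  have "(\<lambda>k. cs k - approx k x) \<longlonglongrightarrow> 0"
  proof (rule Lim_null_comparison)
    show "\<forall>\<^sub>F k in sequentially. norm (cs k - approx k x) \<le> (1/2)^k"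
      using cs(2) by (simp add: dist_norm norm_minus_commute)
  qed (simp add: LIMSEQ_power_zero)
  with convergent_approx have "(\<lambda>k. approx k x + (cs k - approx k x)) \<longlonglongrightarrow> ?l + 0"
    by (intro tendsto_add) (simp_all add: convergent_LIMSEQ_iff)
  then have cs_lim: "cs \<longlonglongrightarrow> ?l" by simp
  then have l_C: "?l \<in> C"
    using closed_sequentially[OF compact_imp_closed[OF compact]] cs(1) by blast
  have "(\<lambda>k. h x (cs k)) \<longlonglongrightarrow> h x ?l"
    using cs(1) by (intro continuous_on_tendsto_compose[OF continuous cs_lim l_C]) simp
  with cs(3) have "h x ?l = min_val x" by (simp add: LIMSEQ_const_iff)
  with l_C show ?thesis by simp
qed

end

lemma (in compact_caratheodory) measurable_argmin_selection:
  obtains f where "f \<in> borel_measurable M" "\<And>x. f x \<in> C" "\<And>x. h x (f x) = min_val x"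
proof -
  obtain D where D: "countable D" "D \<subseteq> C" "C \<subseteq> closure D" using separable by blast
  with nonempty have "D \<noteq> {}" by auto
  with D have "range (from_nat_into D) = D" by (simp add: range_from_nat_into)
  with D interpret argmin_approximation M C h "from_nat_into D"
    by unfold_locales auto
  show ?thesis
    using that borel_measurable_LIMSEQ_metric[OF borel_measurable_approx
        convergent_approx[THEN convergent_LIMSEQ_iff[THEN iffD1]]] lim_approx_argmin
    by blast
qed

lemma continuous_on_rfun:
  fixes \<psi> :: "real \<Rightarrow> 'h::real_inner"
  assumes "continuous_on {a..b} \<psi>" "\<forall>c\<in>C. \<forall>t. c $ t \<in> {a..b}"
  shows "continuous_on C (rfun \<psi> V g x)"
proof -
  have "continuous_on C (\<lambda>c. \<psi> (c $ t))" for t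
    by (rule continuous_on_compose2[OF assms(1)]) (use assms(2) in \<open>auto intro: continuous_intros\<close>)
  then show ?thesis
    unfolding rfun_def[abs_def] by (intro continuous_intros) auto
qed

lemma borel_measurable_rfun:
  fixes \<psi> :: "real \<Rightarrow> 'h::{real_inner, second_countable_topology}"
  assumes "a \<le> b" "continuous_on {a..b} \<psi>" "bounded_linear V"
    and "\<And>t. g t \<in> borel_measurable M" "f \<in> borel_measurable M" "\<And>x t. f x $ t \<in> {a..b}"
  shows "(\<lambda>x. rfun \<psi> V g x (f x)) \<in> borel_measurable M"
proof -
  text \<open>\<open>\<psi>\<close> is only continuous on \<open>[a, b]\<close>; clamping extends it continuously to all of \<open>\<real>\<close>.\<close>
  define \<psi>' where "\<psi>' y = \<psi> (max a (min b y))" for y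
  have "continuous_on UNIV \<psi>'"
    unfolding \<psi>'_def using assms(1)
    by (intro continuous_on_compose2[OF assms(2)] continuous_intros) auto
  then have [measurable]: "\<psi>' \<in> borel_measurable borel"
    by (rule borel_measurable_continuous_onI)
  have [measurable]: "V \<in> borel_measurable borel"
    by (intro borel_measurable_continuous_onI linear_continuous_on assms(3))
  have [measurable]: "(\<lambda>x. f x $ t) \<in> borel_measurable M" for t
    by (intro measurable_compose[OF assms(5)] borel_measurable_continuous_onI continuous_intros)
  note assms(4) [measurable]
  have "(\<lambda>x. rfun \<psi>' V g x (f x)) \<in> borel_measurable M"
    unfolding rfun_def by measurable
  moreover have "rfun \<psi>' V g x (f x) = rfun \<psi> V g x (f x)" for x
    using assms(6) by (simp add: rfun_def \<psi>'_def)
  ultimately show ?thesis by simp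
qed

lemma abs_rfun_le:
  fixes c :: "real^'t::finite"
  assumes "\<And>t. norm (\<psi> (c $ t)) \<le> P" "\<And>t. norm (V (g t x)) \<le> G t"
  shows "\<bar>rfun \<psi> V g x c\<bar> \<le> P * (\<Sum>t\<in>UNIV. G t)"
proof -
  have P: "0 \<le> P"
    using assms(1) norm_ge_zero order_trans by blast
  have "\<bar>inner (\<psi> (c $ t)) (V (g t x))\<bar> \<le> P * G t" for t
    using Cauchy_Schwarz_ineq2 mult_mono[OF assms P norm_ge_zero] order_trans by blast
  then have "\<bar>\<Sum>t\<in>UNIV. inner (\<psi> (c $ t)) (V (g t x))\<bar> \<le> P * (\<Sum>t\<in>UNIV. G t)"
    unfolding sum_distrib_left by (rule order_trans[OF sum_abs sum_mono])
  moreover have "\<bar>1 / real CARD('t)\<bar> * \<bar>\<Sum>t\<in>UNIV. inner (\<psi> (c $ t)) (V (g t x))\<bar>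
      \<le> \<bar>\<Sum>t\<in>UNIV. inner (\<psi> (c $ t)) (V (g t x))\<bar>"
    by (rule mult_left_le_one_le) simp_all
  ultimately show ?thesis
    unfolding rfun_def abs_mult by linarith
qed

lemma integrable_rfun:
  assumes "finite_measure M" "continuous_on {a..b} \<psi>" "bounded_linear V"
    and "\<And>t. \<exists>B. AE x in M. norm (g t x) \<le> B"
    and "(\<lambda>x. rfun \<psi> V g x (f x)) \<in> borel_measurable M" "\<And>x t. f x $ t \<in> {a..b}"
  shows "integrable M (\<lambda>x. rfun \<psi> V g x (f x))"
proof -
  obtain B where B: "\<And>t. AE x in M. norm (g t x) \<le> B t"
    using assms(4) by metis
  obtain P where P: "\<forall>y\<in>{a..b}. norm (\<psi> y) \<le> P"
    using compact_imp_bounded[OF compact_continuous_image[OF assms(2) compact_Icc]]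
    by (auto simp: bounded_iff)
  obtain K where K: "K > 0" "\<And>u. norm (V u) \<le> norm u * K"
    using bounded_linear.pos_bounded[OF assms(3)] by blast
  have "AE x in M. \<forall>t\<in>UNIV. norm (g t x) \<le> B t"
    using B by (intro AE_finite_allI) auto
  then have "AE x in M. norm (rfun \<psi> V g x (f x)) \<le> P * (\<Sum>t\<in>UNIV. B t * K)"
  proof eventually_elim
    case (elim x)
    have "norm (\<psi> (f x $ t)) \<le> P" for t
      using P assms(6) by blast
    moreover have "norm (V (g t x)) \<le> B t * K" for t
    proof -
      have "norm (V (g t x)) \<le> norm (g t x) * K" by (rule K(2))
      also have "\<dots> \<le> B t * K" using elim K(1) by (intro mult_right_mono) auto
      finally show ?thesis .
    qed
    ultimately show ?case
      unfolding real_norm_def by (rule abs_rfun_le)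
  qed
  then show ?thesis
    by (intro finite_measure.integrable_const_bound assms(1,5))
qed

theorem lemma3:
  fixes \<rho> :: "'a::polish_space measure"
    and a b :: real
    and C :: "(real^'t::finite) set"
    and loss :: "real \<Rightarrow> real \<Rightarrow> real"
    and \<psi> :: "real \<Rightarrow> 'h::{real_inner, complete_space, second_countable_topology}"
    and V :: "'h \<Rightarrow> 'h"
    and g :: "'t \<Rightarrow> 'a \<Rightarrow> 'h"
  assumes prob: "prob_space \<rho>"
    and borel: "sets \<rho> = sets borel"
    and ab: "a < b"
    and C_ne: "C \<noteq> {}"
    and C_compact: "compact C"
    and C_sub: "\<forall>c\<in>C. \<forall>t. c $ t \<in> {a..b}"
    and psi_cont: "continuous_on {a..b} \<psi>"
    and V_lin: "bounded_linear V"
    and SELF: "\<forall>y\<in>{a..b}. \<forall>y'\<in>{a..b}. loss y y' = inner (\<psi> y) (V (\<psi> y'))"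
    and ell_cont: "continuous_on ({a..b} \<times> {a..b}) (\<lambda>(y, y'). loss y y')"
    and g_meas: "\<forall>t. g t \<in> borel_measurable \<rho>"
    and g_bdd: "\<forall>t. \<exists>B. AE x in \<rho>. norm (g t x) \<le> B"
  shows "\<exists>f0 m.
     f0 \<in> borel_measurable \<rho> \<and> (\<forall>x. f0 x \<in> C) \<and>
     (\<forall>x. \<forall>c\<in>C. rfun \<psi> V g x (f0 x) \<le> rfun \<psi> V g x c) \<and>
     m \<in> borel_measurable \<rho> \<and>
     (AE x in \<rho>. m x = (INF c\<in>C. rfun \<psi> V g x c)) \<and>
     Ebar \<rho> \<psi> V g f0 = (\<integral>x. m x \<partial>\<rho>) \<and>
     (\<integral>x. m x \<partial>\<rho>) = (INF f\<in>{f. f \<in> borel_measurable \<rho> \<and> (\<forall>x. f x \<in> C)}. Ebar \<rho> \<psi> V g f)"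
proof -
  let ?F = "{f. f \<in> borel_measurable \<rho> \<and> (\<forall>x. f x \<in> C)}"
  have risk_integrable: "integrable \<rho> (\<lambda>x. rfun \<psi> V g x (f x))"
    and risk_measurable: "(\<lambda>x. rfun \<psi> V g x (f x)) \<in> borel_measurable \<rho>" if "f \<in> ?F" for f
    using that C_sub g_meas g_bdd prob_space.finite_measure[OF prob]
      borel_measurable_rfun[OF less_imp_le[OF ab] psi_cont V_lin, of g \<rho> f]
    by (auto intro!: integrable_rfun[OF _ psi_cont V_lin])
  interpret compact_caratheodory \<rho> C "rfun \<psi> V g"
  proof
    show "continuous_on C (rfun \<psi> V g x)" for x
      by (rule continuous_on_rfun[OF psi_cont C_sub])
    show "(\<lambda>x. rfun \<psi> V g x c) \<in> borel_measurable \<rho>" if "c \<in> C" for c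
      by (rule risk_measurable) (simp add: that)
  qed (fact C_compact C_ne)+
  obtain f0 where "f0 \<in> borel_measurable \<rho>" "\<And>x. f0 x \<in> C"
    and f0_min: "\<And>x. rfun \<psi> V g x (f0 x) = min_val x"
    using measurable_argmin_selection by blast
  then have f0: "f0 \<in> ?F" by simp
  have "Ebar \<rho> \<psi> V g f0 \<le> Ebar \<rho> \<psi> V g f" if "f \<in> ?F" for f
    unfolding Ebar_def using that f0 f0_min min_val_le
    by (intro integral_mono risk_integrable) auto
  with f0 have "Ebar \<rho> \<psi> V g f0 = (INF f\<in>?F. Ebar \<rho> \<psi> V g f)"
    by (intro cInf_eq_minimum[symmetric]) auto
  moreover have "Ebar \<rho> \<psi> V g f0 = (\<integral>x. min_val x \<partial>\<rho>)"
    unfolding Ebar_def f0_min ..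
  ultimately show ?thesis
    using f0 f0_min min_val_le borel_measurable_min_val
    by (intro exI[of _ f0] exI[of _ min_val]) (auto simp: min_val_def)
qed

end
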